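(* Fix finite nonempty $A$, $\Omega$, a full-support prior $\mu_0$ on $\Omega$, and a finite $M$ with $|M|>\max\{|\Omega|,|A|\}$. There is a set of transparent environments of Lebesgue measure one in $[0,1]^{|A|(|\Omega|+1)}$ such that, for every environment in it, if cheap-talk Sender values randomization then commitment is valuable.
   Context: An environment $(u_S,u_R)$ with $u_S,u_R:A\times\Omega\to[0,1]$ is transparent if there is $v:A\to[0,1]$ with $u_S(a,\omega)=v(a)$ for all $a,\omega$; the set of transparent environments is identified with $[0,1]^{|A|(|\Omega|+1)}$ (coordinates $v$ and $u_R$). Messaging strategies $\sigma:\Omega\to\Delta M$, action strategies $\rho:M\to\Delta A$, $U_i(\sigma,\rho)=\sum_{\omega,m,a}\mu_0(\omega)\sigma(m|\omega)\rho(a|m)u_i(a,\omega)$. $(\sigma,\rho)$ is S-BR if $\sigma\in\arg\max_{\sigma'}U_S(\sigma',\rho)$ and R-BR if $\rho\in\arg\max_{\rho'}U_R(\sigma,\rho')$; a cheap-talk equilibrium is both. Persuasion payoff: max of $U_S$ over R-BR profiles; cheap-talk payoff: max over cheap-talk equilibria. Commitment is valuable if persuasion payoff > cheap-talk payoff. $\sigma$ is partitional if for every $\omega$ some $m$ has $\sigma(m|\omega)=1$. Partitional cheap-talk payoff: max of $U_S$ over cheap-talk equilibria with partitional $\sigma$. Cheap-talk Sender values randomization if cheap-talk payoff > partitional cheap-talk payoff. *)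

theory Defs
  imports "HOL-Analysis.Analysis"
begin

definition is_dist :: "('x::finite \<Rightarrow> real) \<Rightarrow> bool" where
  "is_dist p \<longleftrightarrow> (\<forall>x. 0 \<le> p x) \<and> sum p UNIV = 1"

definition msg_strat :: "('w::finite \<Rightarrow> 'm::finite \<Rightarrow> real) \<Rightarrow> bool" where
  "msg_strat \<sigma> \<longleftrightarrow> (\<forall>\<omega>. is_dist (\<sigma> \<omega>))"

definition act_strat :: "('m::finite \<Rightarrow> 'a::finite \<Rightarrow> real) \<Rightarrow> bool" where
  "act_strat \<rho> \<longleftrightarrow> (\<forall>m. is_dist (\<rho> m))"

definition payoff :: "('w::finite \<Rightarrow> real) \<Rightarrow> ('a::finite \<Rightarrow> 'w \<Rightarrow> real)
    \<Rightarrow> ('w \<Rightarrow> 'm::finite \<Rightarrow> real) \<Rightarrow> ('m \<Rightarrow> 'a \<Rightarrow> real) \<Rightarrow> real" where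
  "payoff mu u \<sigma> \<rho> = (\<Sum>\<omega>\<in>UNIV. \<Sum>m\<in>UNIV. \<Sum>a\<in>UNIV. mu \<omega> * \<sigma> \<omega> m * \<rho> m a * u a \<omega>)"

definition S_BR :: "('w::finite \<Rightarrow> real) \<Rightarrow> ('a::finite \<Rightarrow> 'w \<Rightarrow> real)
    \<Rightarrow> ('w \<Rightarrow> 'm::finite \<Rightarrow> real) \<Rightarrow> ('m \<Rightarrow> 'a \<Rightarrow> real) \<Rightarrow> bool" where
  "S_BR mu uS \<sigma> \<rho> \<longleftrightarrow> (\<forall>\<sigma>'. msg_strat \<sigma>' \<longrightarrow> payoff mu uS \<sigma>' \<rho> \<le> payoff mu uS \<sigma> \<rho>)"

definition R_BR :: "('w::finite \<Rightarrow> real) \<Rightarrow> ('a::finite \<Rightarrow> 'w \<Rightarrow> real)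
    \<Rightarrow> ('w \<Rightarrow> 'm::finite \<Rightarrow> real) \<Rightarrow> ('m \<Rightarrow> 'a \<Rightarrow> real) \<Rightarrow> bool" where
  "R_BR mu uR \<sigma> \<rho> \<longleftrightarrow> (\<forall>\<rho>'. act_strat \<rho>' \<longrightarrow> payoff mu uR \<sigma> \<rho>' \<le> payoff mu uR \<sigma> \<rho>)"

definition cheap_talk_eq :: "('w::finite \<Rightarrow> real) \<Rightarrow> ('a::finite \<Rightarrow> 'w \<Rightarrow> real) \<Rightarrow> ('a \<Rightarrow> 'w \<Rightarrow> real)
    \<Rightarrow> ('w \<Rightarrow> 'm::finite \<Rightarrow> real) \<Rightarrow> ('m \<Rightarrow> 'a \<Rightarrow> real) \<Rightarrow> bool" where
  "cheap_talk_eq mu uS uR \<sigma> \<rho> \<longleftrightarrow>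
     msg_strat \<sigma> \<and> act_strat \<rho> \<and> S_BR mu uS \<sigma> \<rho> \<and> R_BR mu uR \<sigma> \<rho>"

definition partitional :: "('w \<Rightarrow> 'm \<Rightarrow> real) \<Rightarrow> bool" where
  "partitional \<sigma> \<longleftrightarrow> (\<forall>\<omega>. \<exists>m. \<sigma> \<omega> m = 1)"

text \<open>Payoffs as suprema (the maxima exist; the Sup coincides with the max).
  The message type is passed as an itself-argument.\<close>

definition persuasion_payoff :: "'m::finite itself \<Rightarrow> ('w::finite \<Rightarrow> real)
    \<Rightarrow> ('a::finite \<Rightarrow> 'w \<Rightarrow> real) \<Rightarrow> ('a \<Rightarrow> 'w \<Rightarrow> real) \<Rightarrow> real" where
  "persuasion_payoff _ mu uS uR = Sup {payoff mu uS \<sigma> \<rho> | (\<sigma> :: 'w \<Rightarrow> 'm \<Rightarrow> real) \<rho>.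
      msg_strat \<sigma> \<and> act_strat \<rho> \<and> R_BR mu uR \<sigma> \<rho>}"

definition cheap_talk_payoff :: "'m::finite itself \<Rightarrow> ('w::finite \<Rightarrow> real)
    \<Rightarrow> ('a::finite \<Rightarrow> 'w \<Rightarrow> real) \<Rightarrow> ('a \<Rightarrow> 'w \<Rightarrow> real) \<Rightarrow> real" where
  "cheap_talk_payoff _ mu uS uR = Sup {payoff mu uS \<sigma> \<rho> | (\<sigma> :: 'w \<Rightarrow> 'm \<Rightarrow> real) \<rho>.
      cheap_talk_eq mu uS uR \<sigma> \<rho>}"

definition partitional_cheap_talk_payoff :: "'m::finite itself \<Rightarrow> ('w::finite \<Rightarrow> real)
    \<Rightarrow> ('a::finite \<Rightarrow> 'w \<Rightarrow> real) \<Rightarrow> ('a \<Rightarrow> 'w \<Rightarrow> real) \<Rightarrow> real" where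
  "partitional_cheap_talk_payoff _ mu uS uR = Sup {payoff mu uS \<sigma> \<rho> | (\<sigma> :: 'w \<Rightarrow> 'm \<Rightarrow> real) \<rho>.
      cheap_talk_eq mu uS uR \<sigma> \<rho> \<and> partitional \<sigma>}"

definition commitment_valuable :: "'m::finite itself \<Rightarrow> ('w::finite \<Rightarrow> real)
    \<Rightarrow> ('a::finite \<Rightarrow> 'w \<Rightarrow> real) \<Rightarrow> ('a \<Rightarrow> 'w \<Rightarrow> real) \<Rightarrow> bool" where
  "commitment_valuable M mu uS uR \<longleftrightarrow> persuasion_payoff M mu uS uR > cheap_talk_payoff M mu uS uR"

definition values_randomization :: "'m::finite itself \<Rightarrow> ('w::finite \<Rightarrow> real)
    \<Rightarrow> ('a::finite \<Rightarrow> 'w \<Rightarrow> real) \<Rightarrow> ('a \<Rightarrow> 'w \<Rightarrow> real) \<Rightarrow> bool" where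
  "values_randomization M mu uS uR \<longleftrightarrow>
     cheap_talk_payoff M mu uS uR > partitional_cheap_talk_payoff M mu uS uR"

text \<open>Transparent environments as points of R^(A + A x Omega): coordinates Inl a give v(a),
  coordinates Inr (a,w) give u_R(a,w); Sender utility u_S(a,w) = v(a).\<close>

definition env_uS :: "real ^ ('a::finite + 'a \<times> 'w::finite) \<Rightarrow> 'a \<Rightarrow> 'w \<Rightarrow> real" where
  "env_uS x = (\<lambda>a \<omega>. x $ Inl a)"

definition env_uR :: "real ^ ('a::finite + 'a \<times> 'w::finite) \<Rightarrow> 'a \<Rightarrow> 'w \<Rightarrow> real" where
  "env_uR x = (\<lambda>a \<omega>. x $ Inr (a, \<omega>))"

definition env_cube :: "(real ^ ('a::finite + 'a \<times> 'w::finite)) set" where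
  "env_cube = {x. \<forall>i. 0 \<le> x $ i \<and> x $ i \<le> 1}"

end

theory Submission
  imports Defs
begin

(* Off a null set of environments Sender's utility v is injective on actions. Fix a
   Sender-optimal cheap-talk equilibrium, of value W. Sender is indifferent between the
   messages she sends, so each of them yields expected v equal to W. If some sent message
   is answered, with positive probability, by an action whose v differs from W, then some
   action in that answer has v above W; it is a Receiver best response to the message, so
   breaking the Receiver's tie in its favour keeps Receiver optimal and gives a committed
   Sender more than W. Otherwise, by injectivity of v, a single action is played after every
   sent message; it is then a Receiver best response to the prior, and babbling with that
   action is a partitional equilibrium of value W, so randomization has no value. *)

definition point_mass :: "'x \<Rightarrow> 'x \<Rightarrow> real" where
  "point_mass x = (\<lambda>y. of_bool (y = x))"

definition mean :: "('x::finite \<Rightarrow> real) \<Rightarrow> ('x \<Rightarrow> real) \<Rightarrow> real" where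
  "mean p h = (\<Sum>x\<in>UNIV. p x * h x)"

lemma is_dist_point_mass: "is_dist (point_mass (x::'x::finite))"
  by (simp add: is_dist_def point_mass_def)

lemma is_dist_bounds: "is_dist p \<Longrightarrow> 0 \<le> p x \<and> p x \<le> 1"
  using member_le_sum[of x UNIV p] by (auto simp: is_dist_def)

lemma is_dist_ex_pos:
  assumes "is_dist (p :: 'x::finite \<Rightarrow> real)"
  obtains x where "p x > 0"
  using assms unfolding is_dist_def
  by (metis less_eq_real_def sum_nonneg_eq_0_iff finite_class.finite_UNIV zero_neq_one)

lemma mean_point_mass [simp]: "mean (point_mass x) h = h x"
  by (simp add: mean_def point_mass_def)

lemma mean_const: "is_dist p \<Longrightarrow> mean p (\<lambda>_. c) = c"
  by (simp add: mean_def is_dist_def sum_distrib_right[symmetric])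

lemma mean_scale: "mean p (\<lambda>x. c * h x) = c * mean p h"
  by (simp add: mean_def sum_distrib_left mult_ac)

lemma mean_le:
  assumes "is_dist p" "\<And>x. h x \<le> c"
  shows "mean p h \<le> c"
proof -
  have "mean p h \<le> mean p (\<lambda>_. c)"
    using assms unfolding mean_def is_dist_def by (intro sum_mono mult_left_mono) auto
  then show ?thesis using mean_const[OF assms(1)] by simp
qed

lemma mean_eq_on_support:
  assumes "is_dist p" "\<And>y. p y > 0 \<Longrightarrow> h y \<le> c" "c \<le> mean p h" "p x > 0"
  shows "h x = c"
proof -
  have nonneg: "\<forall>y\<in>UNIV. 0 \<le> p y * (c - h y)"
    using assms(1,2) unfolding is_dist_def
    by (metis diff_ge_0_iff_ge less_eq_real_def mult_eq_0_iff mult_nonneg_nonneg)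
  have "(\<Sum>y\<in>UNIV. p y * (c - h y)) = mean p (\<lambda>_. c) - mean p h"
    by (simp add: mean_def algebra_simps sum_subtractf)
  also have "\<dots> \<le> 0" using assms(1,3) by (simp add: mean_const)
  finally have "(\<Sum>y\<in>UNIV. p y * (c - h y)) = 0"
    using nonneg by (meson antisym sum_nonneg)
  then have "p x * (c - h x) = 0"
    using nonneg by (simp add: sum_nonneg_eq_0_iff)
  then show ?thesis using assms(4) by simp
qed

lemma mean_lt_on_support:
  assumes "is_dist p" "p x > 0" "h x \<noteq> mean p h"
  obtains y where "p y > 0" "mean p h < h y"
  using mean_eq_on_support[OF assms(1) _ order_refl assms(2)] assms(3) by (meson not_le)

(* The Receiver's expected utility from action a after message m, not normalised by the
   probability of m. *)
definition message_utility :: "('w::finite \<Rightarrow> real) \<Rightarrow> ('a \<Rightarrow> 'w \<Rightarrow> real)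
    \<Rightarrow> ('w \<Rightarrow> 'm \<Rightarrow> real) \<Rightarrow> 'm \<Rightarrow> 'a \<Rightarrow> real" where
  "message_utility mu u \<sigma> m a = (\<Sum>\<omega>\<in>UNIV. mu \<omega> * \<sigma> \<omega> m * u a \<omega>)"

lemma payoff_eq_sum_message_utility:
  "payoff mu u \<sigma> \<rho> = (\<Sum>m\<in>UNIV. mean (\<rho> m) (message_utility mu u \<sigma> m))"
proof -
  have "payoff mu u \<sigma> \<rho> =
      (\<Sum>m\<in>UNIV. \<Sum>\<omega>\<in>UNIV. \<Sum>a\<in>UNIV. mu \<omega> * \<sigma> \<omega> m * \<rho> m a * u a \<omega>)"
    unfolding payoff_def by (rule sum.swap)
  also have "\<dots> = (\<Sum>m\<in>UNIV. \<Sum>a\<in>UNIV. \<Sum>\<omega>\<in>UNIV. mu \<omega> * \<sigma> \<omega> m * \<rho> m a * u a \<omega>)"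
    by (rule sum.cong[OF refl], rule sum.swap)
  also have "\<dots> = (\<Sum>m\<in>UNIV. mean (\<rho> m) (message_utility mu u \<sigma> m))"
    by (simp add: mean_def message_utility_def sum_distrib_left mult_ac)
  finally show ?thesis .
qed

lemma payoff_transparent:
  "payoff mu (\<lambda>a \<omega>. v a) \<sigma> \<rho> = mean mu (\<lambda>\<omega>. mean (\<sigma> \<omega>) (\<lambda>m. mean (\<rho> m) v))"
  unfolding payoff_def mean_def by (simp add: sum_distrib_left mult.assoc)

lemma message_utility_transparent:
  "message_utility mu (\<lambda>a \<omega>. v a) \<sigma> m a = (\<Sum>\<omega>\<in>UNIV. mu \<omega> * \<sigma> \<omega> m) * v a"
  by (simp add: message_utility_def sum_distrib_right)

lemma sum_message_utility:
  assumes "msg_strat \<sigma>"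
  shows "(\<Sum>m\<in>UNIV. message_utility mu u \<sigma> m a) = mean mu (u a)"
proof -
  have "(\<Sum>m\<in>UNIV. message_utility mu u \<sigma> m a) =
      (\<Sum>\<omega>\<in>UNIV. mu \<omega> * u a \<omega> * (\<Sum>m\<in>UNIV. \<sigma> \<omega> m))"
    unfolding message_utility_def by (subst sum.swap) (simp add: sum_distrib_left mult_ac)
  then show ?thesis using assms by (simp add: msg_strat_def is_dist_def mean_def)
qed

lemma sum_UNIV_if_eq:
  fixes f :: "'x::finite \<Rightarrow> 'b::ab_group_add"
  shows "(\<Sum>y\<in>UNIV. if y = x then b else f y) = (\<Sum>y\<in>UNIV. f y) - f x + b"
proof -
  have "(\<Sum>y\<in>UNIV. if y = x then b else f y) = b + (\<Sum>y\<in>UNIV - {x}. f y)"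
    by (subst sum.remove[of _ x]) auto
  also have "\<dots> = (\<Sum>y\<in>UNIV. f y) - f x + b"
    by (subst sum.remove[of _ x, where A = UNIV]) auto
  finally show ?thesis .
qed

lemma payoff_fun_upd:
  "payoff mu u \<sigma> (\<rho>(m := q)) =
     payoff mu u \<sigma> \<rho> - mean (\<rho> m) (message_utility mu u \<sigma> m) + mean q (message_utility mu u \<sigma> m)"
proof -
  let ?U = "\<lambda>m'. mean (\<rho> m') (message_utility mu u \<sigma> m')"
  have "payoff mu u \<sigma> (\<rho>(m := q)) =
      (\<Sum>m'\<in>UNIV. if m' = m then mean q (message_utility mu u \<sigma> m) else ?U m')"
    unfolding payoff_eq_sum_message_utility by (rule sum.cong) auto
  then show ?thesis by (simp only: sum_UNIV_if_eq payoff_eq_sum_message_utility)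
qed

lemma payoff_constant_message:
  "payoff mu u (\<lambda>\<omega>. point_mass m) \<rho> = mean (\<rho> m) (\<lambda>a. mean mu (u a))"
proof -
  have "mean (\<rho> m') (message_utility mu u (\<lambda>\<omega>. point_mass m) m') =
      of_bool (m' = m) * mean (\<rho> m) (\<lambda>a. mean mu (u a))" for m'
    by (cases "m' = m") (simp_all add: mean_def message_utility_def point_mass_def mult_ac)
  then show ?thesis by (simp add: payoff_eq_sum_message_utility)
qed

lemma payoff_constant_action:
  assumes "msg_strat \<sigma>"
  shows "payoff mu u \<sigma> (\<lambda>m. point_mass a) = mean mu (u a)"
  using sum_message_utility[OF assms] by (simp add: payoff_eq_sum_message_utility)

section \<open>Receiver best responses and babbling\<close>

lemma R_BR_deviation_le:
  assumes "R_BR mu u \<sigma> \<rho>" "act_strat \<rho>"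
  shows "message_utility mu u \<sigma> m b \<le> mean (\<rho> m) (message_utility mu u \<sigma> m)"
proof -
  have "act_strat (\<rho>(m := point_mass b))"
    using assms(2) is_dist_point_mass by (simp add: act_strat_def)
  with assms(1) have "payoff mu u \<sigma> (\<rho>(m := point_mass b)) \<le> payoff mu u \<sigma> \<rho>"
    by (simp add: R_BR_def)
  then show ?thesis by (simp add: payoff_fun_upd)
qed

lemma R_BR_support:
  assumes "R_BR mu u \<sigma> \<rho>" "act_strat \<rho>" "\<rho> m a > 0"
  shows "message_utility mu u \<sigma> m a = mean (\<rho> m) (message_utility mu u \<sigma> m)"
  using assms(2,3) R_BR_deviation_le[OF assms(1,2)]
  by (intro mean_eq_on_support[of "\<rho> m"]) (auto simp: act_strat_def)

lemma R_BR_fun_upd_point_mass: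
  assumes "R_BR mu u \<sigma> \<rho>" "act_strat \<rho>" "\<rho> m a > 0"
  shows "R_BR mu u \<sigma> (\<rho>(m := point_mass a))"
  using assms(1) R_BR_support[OF assms] by (simp add: R_BR_def payoff_fun_upd)

lemma babbling_cheap_talk_eq:
  assumes "\<And>b. mean mu (uR b) \<le> mean mu (uR a)"
  shows "cheap_talk_eq mu uS uR (\<lambda>\<omega>. point_mass m) (\<lambda>m'. point_mass a)"
  unfolding cheap_talk_eq_def S_BR_def R_BR_def msg_strat_def act_strat_def
  using assms by (auto simp: is_dist_point_mass payoff_constant_action payoff_constant_message
      msg_strat_def intro: mean_le)

section \<open>Existence of a Sender-optimal cheap-talk equilibrium\<close>

(* Strategy profiles are coordinatised as points of a Euclidean space, where compact sets are
   exactly the bounded closed ones. *)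
lemma compact_cheap_talk_eq:
  "compact {z :: (real^('w::finite \<times> 'm::finite)) \<times> (real^('m \<times> 'a::finite)).
     cheap_talk_eq mu uS uR (\<lambda>\<omega> m. fst z $ (\<omega>, m)) (\<lambda>m a. snd z $ (m, a))}"
  (is "compact {z. cheap_talk_eq mu uS uR (?\<sigma> z) (?\<rho> z)}")
proof -
  have closed_is_dist: "closed {z. is_dist (P z)}"
    if "\<And>x. continuous_on UNIV (\<lambda>z. P z x)" for P :: "_ \<Rightarrow> 'x::finite \<Rightarrow> real"
    unfolding is_dist_def
    by (intro closed_Collect_conj closed_Collect_all closed_Collect_le closed_Collect_eq
        continuous_intros that)
  have payoff_cont: "continuous_on UNIV (\<lambda>z. payoff mu u (\<sigma> z) (\<rho> z))"
    if "\<And>\<omega> m. continuous_on UNIV (\<lambda>z. \<sigma> z \<omega> m)" "\<And>m a. continuous_on UNIV (\<lambda>z. \<rho> z m a)"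
    for u and \<sigma> :: "_ \<Rightarrow> 'w \<Rightarrow> 'm \<Rightarrow> real" and \<rho> :: "_ \<Rightarrow> 'm \<Rightarrow> 'a \<Rightarrow> real"
    unfolding payoff_def by (intro continuous_intros that)
  have "closed {z. msg_strat (?\<sigma> z)}" "closed {z. act_strat (?\<rho> z)}"
    unfolding msg_strat_def act_strat_def
    by (intro closed_Collect_all closed_is_dist continuous_intros)+
  moreover have "closed {z. S_BR mu uS (?\<sigma> z) (?\<rho> z)}" "closed {z. R_BR mu uR (?\<sigma> z) (?\<rho> z)}"
    unfolding S_BR_def R_BR_def
    by (intro closed_Collect_all closed_Collect_imp open_Collect_const closed_Collect_le
        payoff_cont continuous_intros)+
  ultimately have "closed {z. cheap_talk_eq mu uS uR (?\<sigma> z) (?\<rho> z)}"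
    unfolding cheap_talk_eq_def by (simp add: Collect_conj_eq closed_Int)
  moreover have "bounded {z. cheap_talk_eq mu uS uR (?\<sigma> z) (?\<rho> z)}"
  proof (rule bounded_subset[OF bounded_Times[OF bounded_cbox bounded_cbox]], safe)
    fix S R assume "cheap_talk_eq mu uS uR (?\<sigma> (S, R)) (?\<rho> (S, R))"
    then have "is_dist (?\<sigma> (S, R) \<omega>)" "is_dist (?\<rho> (S, R) m)" for \<omega> m
      by (auto simp: cheap_talk_eq_def msg_strat_def act_strat_def)
    then have "0 \<le> S $ i \<and> S $ i \<le> 1" "0 \<le> R $ j \<and> R $ j \<le> 1" for i j
        using is_dist_bounds[of "?\<sigma> (S, R) (fst i)" "snd i"]
        is_dist_bounds[of "?\<rho> (S, R) (fst j)" "snd j"]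
      by simp_all
    then show "S \<in> cbox 0 1" "R \<in> cbox 0 1" by (simp_all add: mem_box_cart)
  qed
  ultimately show ?thesis by (simp add: compact_eq_bounded_closed)
qed

lemma cheap_talk_payoff_attained:
  fixes \<sigma>\<^sub>0 :: "'w::finite \<Rightarrow> 'm::finite \<Rightarrow> real" and \<rho>\<^sub>0 :: "'m \<Rightarrow> 'a::finite \<Rightarrow> real"
  assumes "cheap_talk_eq mu uS uR \<sigma>\<^sub>0 \<rho>\<^sub>0"
  obtains \<sigma> :: "'w \<Rightarrow> 'm \<Rightarrow> real" and \<rho> where "cheap_talk_eq mu uS uR \<sigma> \<rho>"
    and "cheap_talk_payoff TYPE('m) mu uS uR = payoff mu uS \<sigma> \<rho>"
proof -
  define K where "K = {z :: (real^('w \<times> 'm)) \<times> (real^('m \<times> 'a)).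
     cheap_talk_eq mu uS uR (\<lambda>\<omega> m. fst z $ (\<omega>, m)) (\<lambda>m a. snd z $ (m, a))}"
  define f where "f z = payoff mu uS (\<lambda>\<omega> m. fst z $ (\<omega>, m)) (\<lambda>m a. snd z $ (m, a))"
    for z :: "(real^('w \<times> 'm)) \<times> (real^('m \<times> 'a))"
  let ?enc = "\<lambda>\<sigma> \<rho>. ((\<chi> i. case_prod \<sigma> i, \<chi> i. case_prod \<rho> i)
      :: (real^('w \<times> 'm)) \<times> (real^('m \<times> 'a)))"
  have enc_K: "?enc \<sigma> \<rho> \<in> K \<longleftrightarrow> cheap_talk_eq mu uS uR \<sigma> \<rho>" for \<sigma> \<rho>
    by (simp add: K_def vec_lambda_inverse)
  have "compact K"
    unfolding K_def by (rule compact_cheap_talk_eq)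
  moreover have "K \<noteq> {}" using enc_K assms by blast
  moreover have "continuous_on K f"
    unfolding f_def payoff_def by (intro continuous_intros)
  ultimately obtain z where z: "z \<in> K" "\<And>y. y \<in> K \<Longrightarrow> f y \<le> f z"
    using continuous_attains_sup by metis
  have eq: "cheap_talk_eq mu uS uR (\<lambda>\<omega> m. fst z $ (\<omega>, m)) (\<lambda>m a. snd z $ (m, a))"
    using z(1) by (simp add: K_def)
  have "payoff mu uS \<sigma> \<rho> \<le> f z" if "cheap_talk_eq mu uS uR \<sigma> \<rho>"
    for \<sigma> :: "'w \<Rightarrow> 'm \<Rightarrow> real" and \<rho>
    using z(2)[of "?enc \<sigma> \<rho>"] that enc_K by (simp add: f_def)
  then have "cheap_talk_payoff TYPE('m) mu uS uR = f z"
    unfolding cheap_talk_payoff_def by (intro cSup_eq_maximum) (use eq in \<open>auto simp: f_def\<close>)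
  with eq show ?thesis unfolding f_def by (rule that)
qed

section \<open>Transparent environments\<close>

lemma payoff_transparent_le_Max:
  assumes "is_dist mu" "msg_strat \<sigma>" "act_strat \<rho>"
  shows "payoff mu (\<lambda>a \<omega>. v a) \<sigma> \<rho> \<le> Max (range v)"
  unfolding payoff_transparent using assms
  by (intro mean_le) (auto simp: msg_strat_def act_strat_def)

lemma S_BR_transparent_sent_message:
  fixes \<sigma> :: "'w::finite \<Rightarrow> 'm::finite \<Rightarrow> real" and v :: "'a::finite \<Rightarrow> real"
  assumes mu: "\<forall>\<omega>. mu \<omega> > 0" "sum mu UNIV = 1"
    and "msg_strat \<sigma>" "S_BR mu (\<lambda>a \<omega>. v a) \<sigma> \<rho>" "\<sigma> \<omega> m > 0"
  shows "mean (\<rho> m) v = payoff mu (\<lambda>a \<omega>. v a) \<sigma> \<rho>"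
proof -
  let ?w = "\<lambda>m. mean (\<rho> m) v"
  define W where "W = Max (range ?w)"
  have "W \<in> range ?w"
    unfolding W_def by (rule Max_in) auto
  then obtain m\<^sub>0 where "?w m\<^sub>0 = W" by auto
  have dist_mu: "is_dist mu" using mu by (auto simp: is_dist_def less_imp_le)
  have dist_\<sigma>: "is_dist (\<sigma> \<omega>)" for \<omega> using assms(3) by (simp add: msg_strat_def)
  have w_le: "?w m \<le> W" for m unfolding W_def by simp
  have "W = payoff mu (\<lambda>a \<omega>. v a) (\<lambda>\<omega>. point_mass m\<^sub>0) \<rho>"
    using \<open>?w m\<^sub>0 = W\<close> by (simp add: payoff_constant_message mean_const[OF dist_mu])
  also have "\<dots> \<le> payoff mu (\<lambda>a \<omega>. v a) \<sigma> \<rho>"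
  proof -
    have "msg_strat (\<lambda>\<omega>::'w. point_mass m\<^sub>0)"
      by (simp add: msg_strat_def is_dist_point_mass)
    with assms(4) show ?thesis unfolding S_BR_def by blast
  qed
  finally have W_le: "W \<le> mean mu (\<lambda>\<omega>. mean (\<sigma> \<omega>) ?w)"
    by (simp add: payoff_transparent)
  have sender_le: "mean (\<sigma> \<omega>) ?w \<le> W" for \<omega>
    using mean_le[OF dist_\<sigma> w_le] .
  have "mean mu (\<lambda>\<omega>. mean (\<sigma> \<omega>) ?w) \<le> W"
    by (rule mean_le[OF dist_mu sender_le])
  with W_le have payoff_W: "payoff mu (\<lambda>a \<omega>. v a) \<sigma> \<rho> = W"
    unfolding payoff_transparent by linarith
  have "mean (\<sigma> \<omega>) ?w = W"
    using mean_eq_on_support[where h = "\<lambda>\<omega>. mean (\<sigma> \<omega>) ?w", OF dist_mu sender_le W_le] mu(1)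
    by blast
  then have "?w m = W"
    using mean_eq_on_support[where h = ?w, OF dist_\<sigma> w_le _ assms(5)] by simp
  with payoff_W show ?thesis by simp
qed

lemma payoff_lt_persuasion_payoff:
  fixes \<sigma> :: "'w::finite \<Rightarrow> 'm::finite \<Rightarrow> real" and v :: "'a::finite \<Rightarrow> real"
  assumes "is_dist mu" "mu \<omega> > 0" "msg_strat \<sigma>" "act_strat \<rho>" "R_BR mu uR \<sigma> \<rho>"
    and "\<sigma> \<omega> m > 0" "\<rho> m a > 0" "mean (\<rho> m) v < v a"
  shows "payoff mu (\<lambda>a \<omega>. v a) \<sigma> \<rho> < persuasion_payoff TYPE('m) mu (\<lambda>a \<omega>. v a) uR"
proof -
  define \<rho>' where "\<rho>' = \<rho>(m := point_mass a)"
  define P where "P = (\<Sum>\<omega>\<in>UNIV. mu \<omega> * \<sigma> \<omega> m)"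
  have "mu \<omega> * \<sigma> \<omega> m \<le> P"
    unfolding P_def using assms(1,3)
    by (intro member_le_sum) (auto simp: is_dist_def msg_strat_def)
  then have "P > 0" using mult_pos_pos[OF assms(2,6)] by linarith
  have "payoff mu (\<lambda>a \<omega>. v a) \<sigma> \<rho>' =
      payoff mu (\<lambda>a \<omega>. v a) \<sigma> \<rho> + P * (v a - mean (\<rho> m) v)"
    unfolding \<rho>'_def payoff_fun_upd message_utility_transparent mean_scale P_def
    by (simp add: right_diff_distrib)
  then have "payoff mu (\<lambda>a \<omega>. v a) \<sigma> \<rho> < payoff mu (\<lambda>a \<omega>. v a) \<sigma> \<rho>'"
    using \<open>P > 0\<close> assms(8) by simp
  also have "\<dots> \<le> persuasion_payoff TYPE('m) mu (\<lambda>a \<omega>. v a) uR"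
    unfolding persuasion_payoff_def
  proof (rule cSup_upper)
    have "act_strat \<rho>'"
      using assms(4) is_dist_point_mass by (simp add: \<rho>'_def act_strat_def)
    then show "payoff mu (\<lambda>a \<omega>. v a) \<sigma> \<rho>' \<in>
        {payoff mu (\<lambda>a \<omega>. v a) \<sigma> \<rho> |(\<sigma> :: 'w \<Rightarrow> 'm \<Rightarrow> real) \<rho>.
          msg_strat \<sigma> \<and> act_strat \<rho> \<and> R_BR mu uR \<sigma> \<rho>}"
      using assms(3) R_BR_fun_upd_point_mass[OF assms(5,4,7)] unfolding \<rho>'_def by blast
    show "bdd_above {payoff mu (\<lambda>a \<omega>. v a) \<sigma> \<rho> |(\<sigma> :: 'w \<Rightarrow> 'm \<Rightarrow> real) \<rho>.
        msg_strat \<sigma> \<and> act_strat \<rho> \<and> R_BR mu uR \<sigma> \<rho>}"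
      using payoff_transparent_le_Max[OF assms(1)] by (intro bdd_aboveI) auto
  qed
  finally show ?thesis .
qed

lemma single_action_le_partitional_cheap_talk_payoff:
  fixes \<sigma> :: "'w::finite \<Rightarrow> 'm::finite \<Rightarrow> real" and v :: "'a::finite \<Rightarrow> real"
  assumes "is_dist mu" "msg_strat \<sigma>" "act_strat \<rho>" "R_BR mu uR \<sigma> \<rho>"
    and single: "\<And>\<omega> m b. \<sigma> \<omega> m > 0 \<Longrightarrow> \<rho> m b > 0 \<Longrightarrow> b = a"
  shows "v a \<le> partitional_cheap_talk_payoff TYPE('m) mu (\<lambda>a \<omega>. v a) uR"
proof -
  have message_best: "message_utility mu uR \<sigma> m b \<le> message_utility mu uR \<sigma> m a" for m b
  proof (cases "\<exists>\<omega>. \<sigma> \<omega> m > 0")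
    case True
    then obtain \<omega> where "\<sigma> \<omega> m > 0" ..
    obtain a' where "\<rho> m a' > 0"
      using assms(3) is_dist_ex_pos by (auto simp: act_strat_def)
    with single[OF \<open>\<sigma> \<omega> m > 0\<close>] have "\<rho> m a > 0" by blast
    then show ?thesis
      using R_BR_deviation_le[OF assms(4,3)] R_BR_support[OF assms(4,3)] by metis
  next
    case False
    have "\<sigma> \<omega> m = 0" for \<omega>
      using False assms(2) is_dist_bounds[of "\<sigma> \<omega>" m] unfolding msg_strat_def
      by (metis less_eq_real_def)
    then show ?thesis by (simp add: message_utility_def)
  qed
  have "(\<Sum>m\<in>UNIV. message_utility mu uR \<sigma> m b) \<le> (\<Sum>m\<in>UNIV. message_utility mu uR \<sigma> m a)"
    for b
    by (rule sum_mono) (rule message_best)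
  then have "mean mu (uR b) \<le> mean mu (uR a)" for b
    by (simp only: sum_message_utility[OF assms(2)])
  then have eq: "cheap_talk_eq mu (\<lambda>a \<omega>. v a) uR (\<lambda>\<omega>. point_mass m) (\<lambda>m'. point_mass a)"
    for m :: 'm
    by (rule babbling_cheap_talk_eq)
  let ?S = "{payoff mu (\<lambda>a \<omega>. v a) \<sigma> \<rho> |(\<sigma> :: 'w \<Rightarrow> 'm \<Rightarrow> real) \<rho>.
      cheap_talk_eq mu (\<lambda>a \<omega>. v a) uR \<sigma> \<rho> \<and> partitional \<sigma>}"
  obtain m :: 'm where True by blast
  have "payoff mu (\<lambda>a \<omega>. v a) (\<lambda>\<omega>. point_mass m) (\<lambda>m'. point_mass a) = v a"
    by (simp add: payoff_constant_action msg_strat_def is_dist_point_mass mean_const[OF assms(1)])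
  moreover have "partitional (\<lambda>\<omega>::'w. point_mass m)"
    by (simp add: partitional_def point_mass_def)
  ultimately have "v a \<in> ?S"
    using eq[of m] by force
  moreover have "bdd_above ?S"
    by (intro bdd_aboveI[of _ "Max (range v)"])
      (auto simp: cheap_talk_eq_def intro: payoff_transparent_le_Max[OF assms(1)])
  ultimately show ?thesis
    unfolding partitional_cheap_talk_payoff_def by (rule cSup_upper)
qed

(* Without equilibria both payoffs are Sup {}, so neither exceeds the other. *)
lemma values_randomization_imp_cheap_talk_eq:
  assumes "values_randomization TYPE('m::finite) mu uS uR"
  shows "\<exists>(\<sigma> :: 'w::finite \<Rightarrow> 'm \<Rightarrow> real) \<rho>. cheap_talk_eq mu uS uR \<sigma> \<rho>"
  using assms by (rule contrapos_pp)
    (simp add: values_randomization_def cheap_talk_payoff_def partitional_cheap_talk_payoff_def)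

lemma values_randomization_imp_commitment_valuable:
  fixes mu :: "'w::finite \<Rightarrow> real" and v :: "'a::finite \<Rightarrow> real"
  assumes mu: "\<forall>\<omega>. mu \<omega> > 0" "sum mu UNIV = 1" and "inj v"
    and randomization: "values_randomization TYPE('m::finite) mu (\<lambda>a \<omega>. v a) uR"
  shows "commitment_valuable TYPE('m) mu (\<lambda>a \<omega>. v a) uR"
proof -
  have dist_mu: "is_dist mu" using mu by (auto simp: is_dist_def less_imp_le)
  obtain \<sigma>\<^sub>0 :: "'w \<Rightarrow> 'm \<Rightarrow> real" and \<rho>\<^sub>0 where "cheap_talk_eq mu (\<lambda>a \<omega>. v a) uR \<sigma>\<^sub>0 \<rho>\<^sub>0"
    using values_randomization_imp_cheap_talk_eq[OF randomization] by blast
  then obtain \<sigma> :: "'w \<Rightarrow> 'm \<Rightarrow> real" and \<rho> where eq: "cheap_talk_eq mu (\<lambda>a \<omega>. v a) uR \<sigma> \<rho>"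
    and optimal: "cheap_talk_payoff TYPE('m) mu (\<lambda>a \<omega>. v a) uR = payoff mu (\<lambda>a \<omega>. v a) \<sigma> \<rho>"
    by (rule cheap_talk_payoff_attained)
  let ?W = "payoff mu (\<lambda>a \<omega>. v a) \<sigma> \<rho>"
  have strat: "msg_strat \<sigma>" "act_strat \<rho>" "S_BR mu (\<lambda>a \<omega>. v a) \<sigma> \<rho>" "R_BR mu uR \<sigma> \<rho>"
    using eq by (auto simp: cheap_talk_eq_def)
  have sent: "mean (\<rho> m) v = ?W" if "\<sigma> \<omega> m > 0" for \<omega> m
    using S_BR_transparent_sent_message[OF mu strat(1,3) that] .
  show ?thesis
  proof (cases "\<exists>\<omega> m a. \<sigma> \<omega> m > 0 \<and> \<rho> m a > 0 \<and> v a \<noteq> ?W")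
    case True
    then obtain \<omega> m a where "\<sigma> \<omega> m > 0" "\<rho> m a > 0" "v a \<noteq> mean (\<rho> m) v"
      using sent by metis
    moreover from this obtain a' where "\<rho> m a' > 0" "mean (\<rho> m) v < v a'"
      using mean_lt_on_support strat(2) by (metis act_strat_def)
    ultimately show ?thesis
      using payoff_lt_persuasion_payoff[OF dist_mu _ strat(1,2,4)] mu(1) optimal
      by (simp add: commitment_valuable_def)
  next
    case False
    obtain \<omega> m a where "\<sigma> \<omega> m > 0" "\<rho> m a > 0"
      using strat(1,2) is_dist_ex_pos by (metis msg_strat_def act_strat_def)
    with False \<open>inj v\<close> have "b = a" if "\<sigma> \<omega>' m' > 0" "\<rho> m' b > 0" for \<omega>' m' b
      using that by (metis injD)
    then have "?W \<le> partitional_cheap_talk_payoff TYPE('m) mu (\<lambda>a \<omega>. v a) uR"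
      using single_action_le_partitional_cheap_talk_payoff[OF dist_mu strat(1,2,4)]
        False \<open>\<sigma> \<omega> m > 0\<close> \<open>\<rho> m a > 0\<close> by metis
    with randomization optimal show ?thesis by (simp add: values_randomization_def)
  qed
qed

section \<open>Generic environments\<close>

lemma negligible_coordinate_eq:
  fixes i j :: "'n::finite"
  assumes "i \<noteq> j"
  shows "negligible {x :: real^'n. x $ i = x $ j}"
proof -
  let ?a = "axis i 1 - axis j 1 :: real^'n"
  have "?a $ i \<noteq> 0" using assms by (simp add: axis_def)
  then have "?a \<noteq> 0" by (metis zero_index)
  moreover have "{x :: real^'n. x $ i = x $ j} = {x. ?a \<bullet> x = 0}"
    by (auto simp: inner_diff_left inner_axis')
  ultimately show ?thesis using negligible_hyperplane by metis
qed

lemma negligible_not_inj_coordinates: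
  fixes f :: "'a::finite \<Rightarrow> 'n::finite"
  assumes "inj f"
  shows "negligible {x :: real^'n. \<not> inj (\<lambda>a. x $ f a)}"
proof -
  have "{x :: real^'n. \<not> inj (\<lambda>a. x $ f a)} =
      (\<Union>(a, b)\<in>{(a, b). a \<noteq> b}. {x. x $ f a = x $ f b})"
    by (auto simp: inj_def)
  also have "negligible \<dots>"
    using assms by (auto intro!: negligible_Union negligible_coordinate_eq simp: inj_eq)
  finally show ?thesis .
qed

lemma emeasure_unit_cube_cart: "emeasure lebesgue (cbox 0 (1 :: real^'n::finite)) = 1"
proof -
  have "(1 :: real^'n) \<bullet> b = 1" if "b \<in> Basis" for b
    using that by (auto simp: Basis_vec_def inner_axis)
  then show ?thesis by (simp add: emeasure_lborel_cbox_eq)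
qed

lemma env_cube_eq_cbox: "env_cube = cbox 0 1"
  unfolding env_cube_def by (auto simp: mem_box_cart)

theorem theorem5:
  fixes mu0 :: "'w::finite \<Rightarrow> real"
  assumes "\<forall>\<omega>. mu0 \<omega> > 0"
    and "sum mu0 UNIV = 1"
    and "CARD('m::finite) > max CARD('w) CARD('a::finite)"
  shows "\<exists>E :: (real ^ ('a + 'a \<times> 'w)) set.
           E \<subseteq> env_cube \<and> E \<in> sets lebesgue \<and> emeasure lebesgue E = 1 \<and>
           (\<forall>x\<in>E. values_randomization TYPE('m) mu0 (env_uS x) (env_uR x)
                    \<longrightarrow> commitment_valuable TYPE('m) mu0 (env_uS x) (env_uR x))"
proof -
  let ?N = "{x :: real ^ ('a + 'a \<times> 'w). \<not> inj (\<lambda>a. x $ Inl a)}"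
  have null: "?N \<in> null_sets lebesgue"
    using negligible_not_inj_coordinates[of Inl] by (simp add: negligible_iff_null_sets)
  have cube: "env_cube \<in> sets lebesgue" "emeasure lebesgue env_cube = 1"
    by (simp_all add: env_cube_eq_cbox emeasure_unit_cube_cart)
  have "env_cube - ?N \<in> sets lebesgue" "emeasure lebesgue (env_cube - ?N) = 1"
    using null cube emeasure_Diff_null_set[OF null cube(1)] by auto
  moreover have "values_randomization TYPE('m) mu0 (env_uS x) (env_uR x)
      \<longrightarrow> commitment_valuable TYPE('m) mu0 (env_uS x) (env_uR x)" if "x \<in> env_cube - ?N" for x
    using values_randomization_imp_commitment_valuable[where 'm = 'm, OF assms(1,2),
        of "\<lambda>a. x $ Inl a"] that
    by (simp add: env_uS_def)
  ultimately show ?thesis by blast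
qed

end
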